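(* Let $w_1>w_2>\cdots>w_t$ and $u_1,\dots,u_t$ be positive integers, and let $\mathcal{S}=\sum_{i=1}^t w_i$ and $\mathcal{T}=\sum_{i=1}^t u_iw_i$. Suppose that every positive integer up to $\mathcal{S}$ is a sum of a subset of $\{w_1,\dots,w_t\}$. Then every integer $m$ with $0\le m\le \mathcal{T}$ can be written as $m=\sum_{i=1}^t a_iw_i$ with integers $0\le a_i\le u_i$. *)

theory Defs
  imports Main
begin

end

theory Submission
  imports Defs
begin

text \<open>Induct on the multiplicities. For multiplicities all equal to 1 the claim is the
  subset-sum hypothesis. Raising one multiplicity \<open>u k \<ge> 1\<close> by one enlarges the target range
  by \<open>w k\<close>; every new target exceeds the old maximum \<open>\<Sum>i. u i * w i \<ge> w k\<close>, so subtracting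
  \<open>w k\<close> lands in the old range, and the extra copy of \<open>w k\<close> is added back.\<close>

definition bounded_combination :: "'i set \<Rightarrow> ('i \<Rightarrow> nat) \<Rightarrow> ('i \<Rightarrow> nat) \<Rightarrow> nat \<Rightarrow> bool" where
  "bounded_combination A w u m \<longleftrightarrow>
     (\<exists>a. (\<forall>i\<in>A. a i \<le> u i) \<and> m = (\<Sum>i\<in>A. a i * w i))"

lemma sum_fun_upd_add_mult:
  fixes f w :: "'i \<Rightarrow> nat"
  assumes "finite A" "k \<in> A"
  shows "(\<Sum>i\<in>A. (f(k := f k + c)) i * w i) = (\<Sum>i\<in>A. f i * w i) + c * w k"
proof -
  have "(\<Sum>i\<in>A - {k}. (f(k := f k + c)) i * w i) = (\<Sum>i\<in>A - {k}. f i * w i)"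
    by (rule sum.cong) auto
  then show ?thesis
    using assms by (simp add: sum.remove algebra_simps)
qed

lemma bounded_combination_mono:
  assumes "bounded_combination A w u m" "\<forall>i\<in>A. u i \<le> u' i"
  shows "bounded_combination A w u' m"
  using assms unfolding bounded_combination_def by (metis order_trans)

lemma bounded_combination_add_weight:
  assumes "finite A" "k \<in> A" "bounded_combination A w u m"
  shows "bounded_combination A w (u(k := u k + 1)) (m + w k)"
proof -
  obtain a where a: "\<forall>i\<in>A. a i \<le> u i" "m = (\<Sum>i\<in>A. a i * w i)"
    using assms(3) unfolding bounded_combination_def by blast
  have "m + w k = (\<Sum>i\<in>A. (a(k := a k + 1)) i * w i)"
    using sum_fun_upd_add_mult[OF assms(1,2), of a 1 w] a(2) by simp
  moreover have "\<forall>i\<in>A. (a(k := a k + 1)) i \<le> (u(k := u k + 1)) i"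
    using a(1) by simp
  ultimately show ?thesis
    unfolding bounded_combination_def by blast
qed

lemma bounded_combinations_fun_upd_Suc:
  fixes w u :: "'i \<Rightarrow> nat"
  assumes A: "finite A" and k: "k \<in> A" "u k > 0"
    and range: "\<forall>m \<le> (\<Sum>i\<in>A. u i * w i). bounded_combination A w u m"
  shows "\<forall>m \<le> (\<Sum>i\<in>A. (u(k := u k + 1)) i * w i). bounded_combination A w (u(k := u k + 1)) m"
proof (intro allI impI)
  fix m
  let ?T = "\<Sum>i\<in>A. u i * w i"
  assume m: "m \<le> (\<Sum>i\<in>A. (u(k := u k + 1)) i * w i)"
  then have m_le: "m \<le> ?T + w k"
    using sum_fun_upd_add_mult[OF A k(1), of u 1 w] by simp
  show "bounded_combination A w (u(k := u k + 1)) m"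
  proof (cases "m \<le> ?T")
    case True
    then show ?thesis
      using range by (auto intro: bounded_combination_mono)
  next
    case False
    have "w k \<le> u k * w k" using k(2) by simp
    also have "\<dots> \<le> ?T" using A k(1) by (intro member_le_sum) auto
    finally have "m - w k + w k = m" using False by simp
    moreover have "bounded_combination A w u (m - w k)"
      using range m_le by simp
    ultimately show ?thesis
      using bounded_combination_add_weight[OF A k(1)] by metis
  qed
qed

lemma bounded_combinations_unit_bounds:
  fixes w u :: "'i \<Rightarrow> nat"
  assumes "finite A" "\<forall>i\<in>A. u i = 1"
    and subset_sums: "\<forall>n. 1 \<le> n \<and> n \<le> sum w A \<longrightarrow> (\<exists>I \<subseteq> A. n = sum w I)"
  shows "\<forall>m \<le> (\<Sum>i\<in>A. u i * w i). bounded_combination A w u m"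
proof (intro allI impI)
  fix m
  assume "m \<le> (\<Sum>i\<in>A. u i * w i)"
  then have "m \<le> sum w A" using assms(2) by simp
  then have "\<exists>I \<subseteq> A. m = sum w I"
    using subset_sums by (cases "m = 0") auto
  then obtain I where I: "I \<subseteq> A" "m = sum w I" by blast
  have "(\<Sum>i\<in>A. (if i \<in> I then 1 else 0) * w i) = sum w (A \<inter> I)"
    unfolding sum.inter_restrict[OF assms(1)] by (rule sum.cong) auto
  also have "A \<inter> I = I" using I(1) by blast
  finally show "bounded_combination A w u m"
    unfolding bounded_combination_def using I(2) assms(2)
    by (intro exI[of _ "\<lambda>i. if i \<in> I then 1 else 0"]) auto
qed

lemma bounded_combinations_of_subset_sums:
  fixes w u :: "'i \<Rightarrow> nat"
  assumes A: "finite A" and pos_u: "\<forall>i\<in>A. u i > 0"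
    and subset_sums: "\<forall>n. 1 \<le> n \<and> n \<le> sum w A \<longrightarrow> (\<exists>I \<subseteq> A. n = sum w I)"
  shows "\<forall>m \<le> (\<Sum>i\<in>A. u i * w i). bounded_combination A w u m"
  using pos_u
proof (induction "\<Sum>i\<in>A. u i" arbitrary: u rule: less_induct)
  case less
  show ?case
  proof (cases "\<exists>k\<in>A. u k \<ge> 2")
    case False
    then have "\<forall>i\<in>A. u i = 1" using less.prems by force
    then show ?thesis using bounded_combinations_unit_bounds[OF A _ subset_sums] by blast
  next
    case True
    then obtain k where k: "k \<in> A" "u k \<ge> 2" by blast
    define u' where "u' = u(k := u k - 1)"
    have u: "u = u'(k := u' k + 1)" using k unfolding u'_def by (auto simp: fun_eq_iff)
    have "(\<Sum>i\<in>A. u i) = (\<Sum>i\<in>A. u' i) + 1"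
      using sum_fun_upd_add_mult[OF A k(1), of u' 1 "\<lambda>_. 1"] u by simp
    moreover have "\<forall>i\<in>A. u' i > 0" using less.prems k unfolding u'_def by auto
    ultimately have "\<forall>m \<le> (\<Sum>i\<in>A. u' i * w i). bounded_combination A w u' m"
      using less.hyps by simp
    moreover have "u' k > 0" using k unfolding u'_def by simp
    ultimately show ?thesis
      using bounded_combinations_fun_upd_Suc[OF A k(1)] u by metis
  qed
qed

theorem theorem5p5:
  fixes t :: nat and w u :: "nat \<Rightarrow> nat"
  assumes pos_w: "\<forall>i\<in>{1..t}. w i > 0"
    and pos_u: "\<forall>i\<in>{1..t}. u i > 0"
    and decr: "\<forall>i\<in>{1..t}. \<forall>j\<in>{1..t}. i < j \<longrightarrow> w i > w j"
    and subset_sums: "\<forall>n. 1 \<le> n \<and> n \<le> (\<Sum>i=1..t. w i) \<longrightarrow>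
                         (\<exists>I \<subseteq> {1..t}. n = (\<Sum>i\<in>I. w i))"
  shows "\<forall>m::nat. m \<le> (\<Sum>i=1..t. u i * w i) \<longrightarrow>
           (\<exists>a :: nat \<Rightarrow> nat. (\<forall>i\<in>{1..t}. a i \<le> u i) \<and> m = (\<Sum>i=1..t. a i * w i))"
  using bounded_combinations_of_subset_sums[OF finite_atLeastAtMost pos_u subset_sums]
  unfolding bounded_combination_def by blast

end
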